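(* Let $R>0$, let $(\beta_j)_{j\ge1}$ and $(\Gamma_n)_{n\ge0}$ be positive sequences, and let $(\mathbb{A}_{\boldsymbol\nu,\lambda})_{\boldsymbol\nu\in\mathcal I,\lambda\in\mathbb{N}_0}$ be a nonnegative sequence with $\mathbb{A}_{\boldsymbol\nu,0}=\delta_{\boldsymbol\nu,\mathbf 0}$, $\mathbb{A}_{\boldsymbol\nu,\lambda}=0$ for $\lambda>|\boldsymbol\nu|$, and otherwise $$\mathbb{A}_{\boldsymbol\nu+\mathbf e_j,\lambda}=R\sum_{\mathbf m\le\boldsymbol\nu}\binom{\boldsymbol\nu}{\mathbf m}\boldsymbol\beta^{\boldsymbol\nu-\mathbf m+\mathbf e_j}\,\Gamma_{|\boldsymbol\nu-\mathbf m|+1}\,\mathbb{A}_{\mathbf m,\lambda-1}\quad\text{for all }\boldsymbol\nu\in\mathcal I,\ j\ge1,\ 1\le\lambda\le|\boldsymbol\nu|+1.$$ Define $\mathbb{B}_{n,1}:=\Gamma_n$ for $n\ge1$ and $\mathbb{B}_{n,\lambda}:=\sum_{i=\lambda-1}^{n-1}\binom{n-1}{i}\Gamma_{n-i}\mathbb{B}_{i,\lambda-1}$ for $n\ge\lambda\ge2$. Then for all $\boldsymbol\nu\in\mathcal I$ with $\boldsymbol\nu\ne\mathbf 0$ and all $1\le\lambda\le|\boldsymbol\nu|$, $$\mathbb{A}_{\boldsymbol\nu,\lambda}=R^\lambda\,\boldsymbol\beta^{\boldsymbol\nu}\,\mathbb{B}_{|\boldsymbol\nu|,\lambda}.$$ Moreover,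 if the recursion holds with "$\le$" in place of "$=$" (with the same conditions $\mathbb{A}_{\boldsymbol\nu,0}=\delta_{\boldsymbol\nu,\mathbf0}$ and $\mathbb{A}_{\boldsymbol\nu,\lambda}=0$ for $\lambda>|\boldsymbol\nu|$), then $\mathbb{A}_{\boldsymbol\nu,\lambda}\le R^\lambda\boldsymbol\beta^{\boldsymbol\nu}\mathbb{B}_{|\boldsymbol\nu|,\lambda}$ for all such $\boldsymbol\nu,\lambda$.
   Context: $\mathcal I:=\{\boldsymbol\nu=(\nu_j)_{j\ge1}\in\mathbb{N}_0^\infty:|\boldsymbol\nu|:=\sum_j\nu_j<\infty\}$. $\mathbf e_j$ is the multiindex with $1$ in position $j$ and $0$ elsewhere; $\mathbf m\le\boldsymbol\nu$ means $m_j\le\nu_j$ for all $j$; $\binom{\boldsymbol\nu}{\mathbf m}=\prod_j\binom{\nu_j}{m_j}$; $\boldsymbol\beta^{\boldsymbol\nu}=\prod_j\beta_j^{\nu_j}$; $\delta_{\boldsymbol\nu,\mathbf0}$ is $1$ if $\boldsymbol\nu=\mathbf0$ and $0$ otherwise. *)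

theory Defs
  imports Complex_Main
begin

text \<open>Multiindices: finitely supported sequences indexed by j >= 1 (position 0 unused, forced to 0).\<close>
definition multiindices :: "(nat \<Rightarrow> nat) set" where
  "multiindices = {\<nu>. finite {j. \<nu> j \<noteq> 0} \<and> \<nu> 0 = 0}"

definition mabs :: "(nat \<Rightarrow> nat) \<Rightarrow> nat" where
  "mabs \<nu> = (\<Sum>j\<in>{j. \<nu> j \<noteq> 0}. \<nu> j)"

definition unitvec :: "nat \<Rightarrow> (nat \<Rightarrow> nat)" where
  "unitvec j = (\<lambda>i. if i = j then 1 else 0)"

definition mbinom :: "(nat \<Rightarrow> nat) \<Rightarrow> (nat \<Rightarrow> nat) \<Rightarrow> nat" where
  "mbinom \<nu> m = (\<Prod>j\<in>{j. \<nu> j \<noteq> 0}. \<nu> j choose m j)"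

definition mpow :: "(nat \<Rightarrow> real) \<Rightarrow> (nat \<Rightarrow> nat) \<Rightarrow> real" where
  "mpow \<beta> \<nu> = (\<Prod>j\<in>{j. \<nu> j \<noteq> 0}. \<beta> j ^ \<nu> j)"

text \<open>B_{n,lambda}: B_{n,1} = Gamma_n, B_{n,lambda} = sum_{i=lambda-1}^{n-1} binom(n-1,i) Gamma_{n-i} B_{i,lambda-1}.
  Value at lambda = 0 is an irrelevant filler.\<close>
fun BB :: "(nat \<Rightarrow> real) \<Rightarrow> nat \<Rightarrow> nat \<Rightarrow> real" where
  "BB G n 0 = 0"
| "BB G n (Suc 0) = G n"
| "BB G n (Suc (Suc k)) =
     (\<Sum>i = Suc k..n - 1. real (n - 1 choose i) * G (n - i) * BB G i (Suc k))"

definition rec_rhs :: "real \<Rightarrow> (nat \<Rightarrow> real) \<Rightarrow> (nat \<Rightarrow> real) \<Rightarrow> ((nat \<Rightarrow> nat) \<Rightarrow> nat \<Rightarrow> real)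
    \<Rightarrow> (nat \<Rightarrow> nat) \<Rightarrow> nat \<Rightarrow> nat \<Rightarrow> real" where
  "rec_rhs R \<beta> G A \<nu> j l =
     R * (\<Sum>m\<in>{m. m \<le> \<nu>}. real (mbinom \<nu> m) * mpow \<beta> (\<lambda>i. \<nu> i - m i + unitvec j i)
            * G (mabs (\<lambda>i. \<nu> i - m i) + 1) * A m (l - 1))"

end

theory Submission
  imports Defs
begin

text \<open>
  The closed form C(nu, l) = R^l beta^nu B(|nu|, l), extended by C(nu, 0) = delta(nu, 0)
  and C(nu, l) = 0 for l > |nu|, is itself an exact solution of the recursion: since
  beta^(nu - m + e_j) beta^m = beta^(nu + e_j), the summand depends on m only through |m|,
  and the multi-index Vandermonde identity
  sum_(m <= nu) binom(nu, m) f(|m|) = sum_t binom(|nu|, t) f(t)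
  reduces the sum to the one-dimensional recursion defining B.
  The right-hand side of the recursion is monotone in A (all coefficients are nonnegative)
  and involves A only at multi-indices of smaller order, so induction on |nu| shows that a
  sub-solution stays below a super-solution with the same boundary values. Comparing A
  with C in one or both directions gives the inequality and the equality.
\<close>

definition binomial_transform :: "nat \<Rightarrow> (nat \<Rightarrow> 'a::comm_semiring_1) \<Rightarrow> 'a" where
  "binomial_transform p f = (\<Sum>t\<le>p. of_nat (p choose t) * f t)"

lemma binomial_transform_Suc:
  "binomial_transform (Suc p) f = binomial_transform p f + binomial_transform p (\<lambda>t. f (Suc t))"
proof -
  have shifted: "binomial_transform p f = f 0 + (\<Sum>t\<le>p. of_nat (p choose Suc t) * f (Suc t))"
  proof -
    have "binomial_transform p f = (\<Sum>t\<le>Suc p. of_nat (p choose t) * f t)"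
      unfolding binomial_transform_def by (simp add: binomial_eq_0)
    also have "\<dots> = f 0 + (\<Sum>t\<le>p. of_nat (p choose Suc t) * f (Suc t))"
      by (subst sum.atMost_Suc_shift) (simp add: binomial_eq_0)
    finally show ?thesis .
  qed
  have "binomial_transform (Suc p) f = f 0 + (\<Sum>t\<le>p. of_nat (p choose Suc t) * f (Suc t))
      + binomial_transform p (\<lambda>t. f (Suc t))"
    unfolding binomial_transform_def
    by (subst sum.atMost_Suc_shift) (simp add: ring_distribs sum.distrib add_ac)
  then show ?thesis by (simp add: shifted)
qed

lemma binomial_transform_convolution:
  "binomial_transform p (\<lambda>t. binomial_transform q (\<lambda>k. f (t + k))) = binomial_transform (p + q) f"
proof (induction p arbitrary: f)
  case 0
  then show ?case by (simp add: binomial_transform_def)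
next
  case (Suc p)
  then show ?case
    using Suc.IH[of "\<lambda>t. f (Suc t)"] by (simp add: binomial_transform_Suc)
qed

definition box :: "nat set \<Rightarrow> (nat \<Rightarrow> nat) \<Rightarrow> (nat \<Rightarrow> nat) set" where
  "box S \<nu> = {m. (\<forall>i\<in>S. m i \<le> \<nu> i) \<and> (\<forall>i. i \<notin> S \<longrightarrow> m i = 0)}"

lemma box_empty [simp]: "box {} \<nu> = {\<lambda>_. 0}"
  by (auto simp: box_def)

lemma box_insert:
  assumes "a \<notin> S"
  shows "box (insert a S) \<nu> = (\<lambda>(t, m). m(a := t)) ` ({..\<nu> a} \<times> box S \<nu>)"
proof (intro equalityI subsetI)
  fix m assume "m \<in> box (insert a S) \<nu>"
  then have "(m a, m(a := 0)) \<in> {..\<nu> a} \<times> box S \<nu>" and "m = (m(a := 0))(a := m a)"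
    using assms by (auto simp: box_def)
  then show "m \<in> (\<lambda>(t, m). m(a := t)) ` ({..\<nu> a} \<times> box S \<nu>)"
    by (metis (no_types, lifting) case_prod_conv image_eqI)
qed (use assms in \<open>auto simp: box_def\<close>)

lemma inj_on_box_insert:
  assumes "a \<notin> S"
  shows "inj_on (\<lambda>(t, m). m(a := t)) ({..\<nu> a} \<times> box S \<nu>)"
proof (rule inj_onI, clarsimp)
  fix t m t' m' assume "m \<in> box S \<nu>" "m' \<in> box S \<nu>" and eq: "m(a := t) = m'(a := t')"
  then have "m a = m' a" using assms by (simp add: box_def)
  with eq show "t = t' \<and> m = m'"
    by (metis fun_upd_same fun_upd_triv fun_upd_upd)
qed

lemma sum_box_binomial:
  fixes f :: "nat \<Rightarrow> 'a::comm_semiring_1"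
  assumes "finite S"
  shows "(\<Sum>m\<in>box S \<nu>. (\<Prod>i\<in>S. of_nat (\<nu> i choose m i)) * f (\<Sum>i\<in>S. m i))
         = binomial_transform (\<Sum>i\<in>S. \<nu> i) f"
  using assms
proof (induction S arbitrary: f rule: finite_induct)
  case empty
  then show ?case by (simp add: binomial_transform_def)
next
  case (insert a S)
  have upd: "(\<Prod>i\<in>insert a S. of_nat (\<nu> i choose (m(a := t)) i)) * f (\<Sum>i\<in>insert a S. (m(a := t)) i)
      = of_nat (\<nu> a choose t) * ((\<Prod>i\<in>S. of_nat (\<nu> i choose m i)) * f (t + (\<Sum>i\<in>S. m i)))" for t m
  proof -
    have "(\<Prod>i\<in>S. of_nat (\<nu> i choose (m(a := t)) i)) = (\<Prod>i\<in>S. of_nat (\<nu> i choose m i) :: 'a)"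
      and "(\<Sum>i\<in>S. (m(a := t)) i) = (\<Sum>i\<in>S. m i)"
      using insert.hyps(2) by (auto intro!: prod.cong sum.cong)
    with insert.hyps show ?thesis by (simp add: mult_ac)
  qed
  have "(\<Sum>m\<in>box (insert a S) \<nu>. (\<Prod>i\<in>insert a S. of_nat (\<nu> i choose m i)) * f (\<Sum>i\<in>insert a S. m i))
      = (\<Sum>(t, m)\<in>{..\<nu> a} \<times> box S \<nu>.
           of_nat (\<nu> a choose t) * ((\<Prod>i\<in>S. of_nat (\<nu> i choose m i)) * f (t + (\<Sum>i\<in>S. m i))))"
    unfolding box_insert[OF insert.hyps(2)] sum.reindex[OF inj_on_box_insert[OF insert.hyps(2)]]
    by (simp add: case_prod_beta' upd del: fun_upd_apply)
  also have "\<dots> = (\<Sum>t\<le>\<nu> a. of_nat (\<nu> a choose t)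
           * (\<Sum>m\<in>box S \<nu>. (\<Prod>i\<in>S. of_nat (\<nu> i choose m i)) * f (t + (\<Sum>i\<in>S. m i))))"
    by (simp add: sum.cartesian_product sum_distrib_left)
  also have "\<dots> = binomial_transform (\<nu> a) (\<lambda>t. binomial_transform (\<Sum>i\<in>S. \<nu> i) (\<lambda>k. f (t + k)))"
    unfolding binomial_transform_def[of "\<nu> a"] using insert.IH[of "\<lambda>k. f (_ + k)"] by simp
  also have "\<dots> = binomial_transform (\<Sum>i\<in>insert a S. \<nu> i) f"
    using insert.hyps by (simp add: binomial_transform_convolution)
  finally show ?case .
qed

lemma finite_support_multiindex: "\<nu> \<in> multiindices \<Longrightarrow> finite {j. \<nu> j \<noteq> 0}"
  by (simp add: multiindices_def)

lemma mabs_eq_sum_superset: "finite S \<Longrightarrow> {j. x j \<noteq> 0} \<subseteq> S \<Longrightarrow> mabs x = (\<Sum>i\<in>S. x i)"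
  unfolding mabs_def by (rule sum.mono_neutral_left) auto

lemma mpow_eq_prod_superset: "finite S \<Longrightarrow> {j. x j \<noteq> 0} \<subseteq> S \<Longrightarrow> mpow \<beta> x = (\<Prod>i\<in>S. \<beta> i ^ x i)"
  unfolding mpow_def by (rule prod.mono_neutral_left) auto

lemma mpow_nonneg: "(\<And>i. x i \<noteq> 0 \<Longrightarrow> \<beta> i \<ge> 0) \<Longrightarrow> mpow \<beta> x \<ge> 0"
  unfolding mpow_def by (intro prod_nonneg zero_le_power) simp

lemma mabs_eq_0_iff:
  assumes "\<nu> \<in> multiindices"
  shows "mabs \<nu> = 0 \<longleftrightarrow> \<nu> = (\<lambda>_. 0)"
  using finite_support_multiindex[OF assms] by (auto simp: mabs_def fun_eq_iff)

lemma support_le_subset: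
  fixes m \<nu> :: "nat \<Rightarrow> nat"
  assumes "m \<le> \<nu>"
  shows "{j. m j \<noteq> 0} \<subseteq> {j. \<nu> j \<noteq> 0}"
proof
  fix j assume "j \<in> {j. m j \<noteq> 0}"
  with le_funD[OF assms, of j] show "j \<in> {j. \<nu> j \<noteq> 0}" by auto
qed

lemma multiindices_le: "\<nu> \<in> multiindices \<Longrightarrow> m \<le> \<nu> \<Longrightarrow> m \<in> multiindices"
  using support_le_subset[of m \<nu>] by (auto simp: multiindices_def le_fun_def intro: finite_subset)

lemma mabs_add_unitvec:
  assumes "\<nu> \<in> multiindices"
  shows "mabs (\<lambda>i. \<nu> i + unitvec j i) = mabs \<nu> + 1"
proof -
  let ?S = "insert j {i. \<nu> i \<noteq> 0}"
  have fin: "finite ?S" using finite_support_multiindex[OF assms] by simp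
  have "mabs (\<lambda>i. \<nu> i + unitvec j i) = (\<Sum>i\<in>?S. \<nu> i) + (\<Sum>i\<in>?S. unitvec j i)"
    by (subst mabs_eq_sum_superset[OF fin]) (auto simp: unitvec_def sum.distrib)
  also have "\<dots> = mabs \<nu> + 1"
    using fin by (subst mabs_eq_sum_superset[OF fin]) (auto simp: unitvec_def)
  finally show ?thesis .
qed

lemma mabs_diff_add:
  assumes "\<nu> \<in> multiindices" "m \<le> \<nu>"
  shows "mabs (\<lambda>i. \<nu> i - m i) + mabs m = mabs \<nu>"
proof -
  let ?S = "{i. \<nu> i \<noteq> 0}"
  have fin: "finite ?S" using finite_support_multiindex[OF assms(1)] .
  have "mabs (\<lambda>i. \<nu> i - m i) + mabs m = (\<Sum>i\<in>?S. \<nu> i - m i + m i)"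
    using fin support_le_subset[OF assms(2)]
    by (simp add: mabs_eq_sum_superset[of ?S] sum.distrib subset_eq)
  also have "\<dots> = mabs \<nu>"
    using assms(2) by (simp add: le_fun_def mabs_def)
  finally show ?thesis .
qed

lemma mpow_diff_add_unitvec:
  assumes "\<nu> \<in> multiindices" "m \<le> \<nu>"
  shows "mpow \<beta> (\<lambda>i. \<nu> i - m i + unitvec j i) * mpow \<beta> m = mpow \<beta> (\<lambda>i. \<nu> i + unitvec j i)"
proof -
  let ?S = "insert j {i. \<nu> i \<noteq> 0}"
  have fin: "finite ?S" using finite_support_multiindex[OF assms(1)] by simp
  have split: "\<beta> i ^ (\<nu> i - m i + unitvec j i) * \<beta> i ^ m i = \<beta> i ^ (\<nu> i + unitvec j i)" for i
    using le_funD[OF assms(2), of i] by (simp flip: power_add)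
  have "mpow \<beta> (\<lambda>i. \<nu> i - m i + unitvec j i) = (\<Prod>i\<in>?S. \<beta> i ^ (\<nu> i - m i + unitvec j i))"
    by (rule mpow_eq_prod_superset[OF fin]) (auto simp: unitvec_def)
  moreover have "mpow \<beta> m = (\<Prod>i\<in>?S. \<beta> i ^ m i)"
    by (rule mpow_eq_prod_superset[OF fin]) (use support_le_subset[OF assms(2)] in auto)
  moreover have "mpow \<beta> (\<lambda>i. \<nu> i + unitvec j i) = (\<Prod>i\<in>?S. \<beta> i ^ (\<nu> i + unitvec j i))"
    by (rule mpow_eq_prod_superset[OF fin]) (auto simp: unitvec_def)
  ultimately show ?thesis by (simp add: split flip: prod.distrib)
qed

lemma le_eq_box_support: "{m. m \<le> \<nu>} = box {j. \<nu> j \<noteq> 0} \<nu>"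
  unfolding box_def le_fun_def by auto (metis le_zero_eq, metis le_refl neq0_conv)

lemma sum_le_multiindex_binomial:
  fixes f :: "nat \<Rightarrow> 'a::comm_semiring_1"
  assumes "\<nu> \<in> multiindices"
  shows "(\<Sum>m | m \<le> \<nu>. of_nat (mbinom \<nu> m) * f (mabs m)) = binomial_transform (mabs \<nu>) f"
proof -
  let ?S = "{j. \<nu> j \<noteq> 0}"
  have fin: "finite ?S" using assms by (rule finite_support_multiindex)
  have "(\<Sum>m | m \<le> \<nu>. of_nat (mbinom \<nu> m) * f (mabs m))
      = (\<Sum>m\<in>box ?S \<nu>. (\<Prod>i\<in>?S. of_nat (\<nu> i choose m i)) * f (\<Sum>i\<in>?S. m i))"
    unfolding le_eq_box_support
  proof (rule sum.cong[OF refl])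
    fix m assume "m \<in> box ?S \<nu>"
    then have "mabs m = (\<Sum>i\<in>?S. m i)"
      using fin by (intro mabs_eq_sum_superset) (auto simp: box_def)
    then show "of_nat (mbinom \<nu> m) * f (mabs m) = (\<Prod>i\<in>?S. of_nat (\<nu> i choose m i)) * f (\<Sum>i\<in>?S. m i)"
      by (simp add: mbinom_def)
  qed
  also have "\<dots> = binomial_transform (\<Sum>i\<in>?S. \<nu> i) f"
    by (rule sum_box_binomial[OF fin])
  also have "(\<Sum>i\<in>?S. \<nu> i) = mabs \<nu>"
    unfolding mabs_def ..
  finally show ?thesis .
qed

lemma multiindex_decompose:
  assumes "\<nu> \<in> multiindices" "\<nu> \<noteq> (\<lambda>_. 0)"
  obtains \<nu>' j where "\<nu>' \<in> multiindices" "j \<ge> 1" "\<nu> = (\<lambda>i. \<nu>' i + unitvec j i)"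
proof -
  obtain j where j: "\<nu> j \<noteq> 0" using assms(2) by auto
  have "(\<lambda>i. \<nu> i - unitvec j i) \<in> multiindices"
    using assms(1) by (rule multiindices_le) (simp add: le_fun_def)
  moreover have "j \<ge> 1" using j assms(1) by (cases j) (auto simp: multiindices_def)
  moreover have "\<nu> = (\<lambda>i. \<nu> i - unitvec j i + unitvec j i)"
    using j by (auto simp: unitvec_def)
  ultimately show ?thesis by (rule that)
qed

text \<open>\<open>BB G n l\<close> need not vanish for \<open>l > n\<close> (e.g. \<open>BB G 0 1 = G 0\<close>), hence the cut-off.\<close>

definition BB_ext :: "(nat \<Rightarrow> real) \<Rightarrow> nat \<Rightarrow> nat \<Rightarrow> real" where
  "BB_ext G n l = (if l = 0 then (if n = 0 then 1 else 0) else if l \<le> n then BB G n l else 0)"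

lemma BB_ext_Suc:
  assumes "1 \<le> l" "l \<le> n + 1"
  shows "BB_ext G (n + 1) l = binomial_transform n (\<lambda>t. G (n - t + 1) * BB_ext G t (l - 1))"
proof (cases "l = 1")
  case True
  then show ?thesis
    unfolding binomial_transform_def BB_ext_def by (simp add: sum.atMost_shift)
next
  case False
  obtain k where l: "l = Suc (Suc k)"
    using assms(1) False by (intro that[of "l - 2"]) simp
  have "binomial_transform n (\<lambda>t. G (n - t + 1) * BB_ext G t (l - 1))
      = (\<Sum>t = Suc k..n. real (n choose t) * G (Suc n - t) * BB G t (Suc k))"
    unfolding binomial_transform_def
    by (rule sum.mono_neutral_cong_right) (auto simp: l BB_ext_def Suc_diff_le)
  then show ?thesis using assms(2) by (simp add: l BB_ext_def)
qed

definition closed_form :: "real \<Rightarrow> (nat \<Rightarrow> real) \<Rightarrow> (nat \<Rightarrow> real) \<Rightarrow> (nat \<Rightarrow> nat) \<Rightarrow> nat \<Rightarrow> real" where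
  "closed_form R \<beta> G \<nu> l = R ^ l * mpow \<beta> \<nu> * BB_ext G (mabs \<nu>) l"

lemma closed_form_0:
  "\<nu> \<in> multiindices \<Longrightarrow> closed_form R \<beta> G \<nu> 0 = (if \<nu> = (\<lambda>_. 0) then 1 else 0)"
  by (simp add: closed_form_def BB_ext_def mabs_eq_0_iff mpow_def)

lemma closed_form_above_mabs: "mabs \<nu> < l \<Longrightarrow> closed_form R \<beta> G \<nu> l = 0"
  by (simp add: closed_form_def BB_ext_def)

lemma closed_form_eq_BB:
  "1 \<le> l \<Longrightarrow> l \<le> mabs \<nu> \<Longrightarrow> closed_form R \<beta> G \<nu> l = R ^ l * mpow \<beta> \<nu> * BB G (mabs \<nu>) l"
  by (simp add: closed_form_def BB_ext_def)

lemma rec_rhs_closed_form: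
  assumes \<nu>: "\<nu> \<in> multiindices" and l: "1 \<le> l" "l \<le> mabs \<nu> + 1"
  shows "rec_rhs R \<beta> G (closed_form R \<beta> G) \<nu> j l = closed_form R \<beta> G (\<lambda>i. \<nu> i + unitvec j i) l"
proof -
  let ?N = "mabs \<nu>" and ?\<nu>j = "\<lambda>i. \<nu> i + unitvec j i"
  define g where "g t = G (?N - t + 1) * BB_ext G t (l - 1)" for t
  have summand: "real (mbinom \<nu> m) * mpow \<beta> (\<lambda>i. \<nu> i - m i + unitvec j i)
        * G (mabs (\<lambda>i. \<nu> i - m i) + 1) * closed_form R \<beta> G m (l - 1)
      = R ^ (l - 1) * mpow \<beta> ?\<nu>j * (real (mbinom \<nu> m) * g (mabs m))" if "m \<le> \<nu>" for m
  proof -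
    have "mabs (\<lambda>i. \<nu> i - m i) = ?N - mabs m"
      using mabs_diff_add[OF \<nu> that] by linarith
    then show ?thesis
      by (simp add: closed_form_def g_def mpow_diff_add_unitvec[OF \<nu> that, symmetric] mult_ac)
  qed
  have "rec_rhs R \<beta> G (closed_form R \<beta> G) \<nu> j l
      = R * (R ^ (l - 1) * mpow \<beta> ?\<nu>j * (\<Sum>m | m \<le> \<nu>. real (mbinom \<nu> m) * g (mabs m)))"
    unfolding rec_rhs_def sum_distrib_left using summand by (intro arg_cong[where f = "(*) R"] sum.cong) auto
  also have "(\<Sum>m | m \<le> \<nu>. real (mbinom \<nu> m) * g (mabs m)) = binomial_transform ?N g"
    by (rule sum_le_multiindex_binomial[OF \<nu>])
  also have "binomial_transform ?N g = BB_ext G (?N + 1) l"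
    unfolding g_def[abs_def] by (rule BB_ext_Suc[OF l, symmetric])
  also have "R * (R ^ (l - 1) * mpow \<beta> ?\<nu>j * BB_ext G (?N + 1) l) = closed_form R \<beta> G ?\<nu>j l"
    using l(1) by (cases l) (simp_all add: closed_form_def mabs_add_unitvec[OF \<nu>])
  finally show ?thesis .
qed

lemma rec_rhs_mono:
  assumes R: "R \<ge> 0" and \<beta>: "\<And>i. i \<ge> 1 \<Longrightarrow> \<beta> i \<ge> 0" and G: "\<And>n. G n \<ge> 0"
    and \<nu>: "\<nu> \<in> multiindices" and j: "j \<ge> 1"
    and le: "\<And>m. m \<le> \<nu> \<Longrightarrow> A m (l - 1) \<le> B m (l - 1)"
  shows "rec_rhs R \<beta> G A \<nu> j l \<le> rec_rhs R \<beta> G B \<nu> j l"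
  unfolding rec_rhs_def
proof (rule mult_left_mono[OF sum_mono R])
  fix m assume m: "m \<in> {m. m \<le> \<nu>}"
  have "\<nu> 0 = 0" using \<nu> by (simp add: multiindices_def)
  then have "mpow \<beta> (\<lambda>i. \<nu> i - m i + unitvec j i) \<ge> 0"
    using j by (intro mpow_nonneg \<beta>) (auto simp: unitvec_def Suc_le_eq intro!: gr0I)
  with G have "0 \<le> real (mbinom \<nu> m) * mpow \<beta> (\<lambda>i. \<nu> i - m i + unitvec j i)
      * G (mabs (\<lambda>i. \<nu> i - m i) + 1)"
    by simp
  with le m show "real (mbinom \<nu> m) * mpow \<beta> (\<lambda>i. \<nu> i - m i + unitvec j i)
        * G (mabs (\<lambda>i. \<nu> i - m i) + 1) * A m (l - 1)
      \<le> real (mbinom \<nu> m) * mpow \<beta> (\<lambda>i. \<nu> i - m i + unitvec j i)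
        * G (mabs (\<lambda>i. \<nu> i - m i) + 1) * B m (l - 1)"
    by (simp add: mult_left_mono)
qed

lemma rec_rhs_comparison:
  assumes R: "R \<ge> 0" and \<beta>: "\<And>i. i \<ge> 1 \<Longrightarrow> \<beta> i \<ge> 0" and G: "\<And>n. G n \<ge> 0"
    and boundary: "\<And>\<nu> l. \<nu> \<in> multiindices \<Longrightarrow> l = 0 \<or> mabs \<nu> < l \<Longrightarrow> A \<nu> l \<le> B \<nu> l"
    and sub: "\<And>\<nu> j l. \<nu> \<in> multiindices \<Longrightarrow> j \<ge> 1 \<Longrightarrow> 1 \<le> l \<Longrightarrow> l \<le> mabs \<nu> + 1 \<Longrightarrow>
      A (\<lambda>i. \<nu> i + unitvec j i) l \<le> rec_rhs R \<beta> G A \<nu> j l"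
    and super: "\<And>\<nu> j l. \<nu> \<in> multiindices \<Longrightarrow> j \<ge> 1 \<Longrightarrow> 1 \<le> l \<Longrightarrow> l \<le> mabs \<nu> + 1 \<Longrightarrow>
      rec_rhs R \<beta> G B \<nu> j l \<le> B (\<lambda>i. \<nu> i + unitvec j i) l"
  shows "\<nu> \<in> multiindices \<Longrightarrow> A \<nu> l \<le> B \<nu> l"
proof (induction "mabs \<nu>" arbitrary: \<nu> l rule: less_induct)
  case less
  show ?case
  proof (cases "l = 0 \<or> mabs \<nu> < l")
    case True
    then show ?thesis using boundary less.prems by blast
  next
    case False
    then have "\<nu> \<noteq> (\<lambda>_. 0)" using mabs_eq_0_iff[OF less.prems] by auto
    with less.prems obtain \<nu>' j
      where \<nu>': "\<nu>' \<in> multiindices" "j \<ge> 1" and \<nu>_eq: "\<nu> = (\<lambda>i. \<nu>' i + unitvec j i)"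
      by (rule multiindex_decompose)
    have mabs_\<nu>: "mabs \<nu> = mabs \<nu>' + 1"
      unfolding \<nu>_eq by (rule mabs_add_unitvec[OF \<nu>'(1)])
    have IH: "A m (l - 1) \<le> B m (l - 1)" if "m \<le> \<nu>'" for m
      using less.hyps[OF _ multiindices_le[OF \<nu>'(1) that]] mabs_diff_add[OF \<nu>'(1) that] mabs_\<nu>
      by simp
    have l: "1 \<le> l" "l \<le> mabs \<nu>' + 1" using False mabs_\<nu> by auto
    have "A \<nu> l \<le> rec_rhs R \<beta> G A \<nu>' j l"
      unfolding \<nu>_eq using sub[OF \<nu>' l] .
    also have "\<dots> \<le> rec_rhs R \<beta> G B \<nu>' j l"
      by (rule rec_rhs_mono[where A = A and B = B, OF R \<beta> G \<nu>' IH])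
    also have "\<dots> \<le> B \<nu> l"
      unfolding \<nu>_eq using super[OF \<nu>' l] .
    finally show ?thesis .
  qed
qed

lemma closed_form_comparison:
  assumes R: "R \<ge> 0" and \<beta>: "\<And>i. i \<ge> 1 \<Longrightarrow> \<beta> i \<ge> 0" and G: "\<And>n. G n \<ge> 0"
    and A0: "\<And>\<nu>. \<nu> \<in> multiindices \<Longrightarrow> A \<nu> 0 = (if \<nu> = (\<lambda>_. 0) then 1 else 0)"
    and Abig: "\<And>\<nu> l. \<nu> \<in> multiindices \<Longrightarrow> l > mabs \<nu> \<Longrightarrow> A \<nu> l = 0"
    and \<nu>: "\<nu> \<in> multiindices"
  shows "(\<And>\<nu> j l. \<nu> \<in> multiindices \<Longrightarrow> j \<ge> 1 \<Longrightarrow> 1 \<le> l \<Longrightarrow> l \<le> mabs \<nu> + 1 \<Longrightarrow>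
           A (\<lambda>i. \<nu> i + unitvec j i) l \<le> rec_rhs R \<beta> G A \<nu> j l)
         \<Longrightarrow> A \<nu> l \<le> closed_form R \<beta> G \<nu> l"
    and "(\<And>\<nu> j l. \<nu> \<in> multiindices \<Longrightarrow> j \<ge> 1 \<Longrightarrow> 1 \<le> l \<Longrightarrow> l \<le> mabs \<nu> + 1 \<Longrightarrow>
           rec_rhs R \<beta> G A \<nu> j l \<le> A (\<lambda>i. \<nu> i + unitvec j i) l)
         \<Longrightarrow> closed_form R \<beta> G \<nu> l \<le> A \<nu> l"
proof -
  let ?C = "closed_form R \<beta> G"
  have boundary: "A \<nu> l \<le> ?C \<nu> l" "?C \<nu> l \<le> A \<nu> l"
    if "\<nu> \<in> multiindices" "l = 0 \<or> mabs \<nu> < l" for \<nu> l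
    using that A0 Abig closed_form_0 closed_form_above_mabs by auto
  have C_rec:
    "rec_rhs R \<beta> G ?C \<nu> j l \<le> ?C (\<lambda>i. \<nu> i + unitvec j i) l"
    "?C (\<lambda>i. \<nu> i + unitvec j i) l \<le> rec_rhs R \<beta> G ?C \<nu> j l"
    if "\<nu> \<in> multiindices" "j \<ge> 1" "1 \<le> l" "l \<le> mabs \<nu> + 1" for \<nu> j l
    using rec_rhs_closed_form[OF that(1,3,4)] by simp_all
  show "A \<nu> l \<le> ?C \<nu> l" if "\<And>\<nu> j l. \<nu> \<in> multiindices \<Longrightarrow> j \<ge> 1 \<Longrightarrow> 1 \<le> l \<Longrightarrow>
      l \<le> mabs \<nu> + 1 \<Longrightarrow> A (\<lambda>i. \<nu> i + unitvec j i) l \<le> rec_rhs R \<beta> G A \<nu> j l"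
    by (rule rec_rhs_comparison[where G = G, OF R \<beta> G boundary(1) that C_rec(1) \<nu>])
  show "?C \<nu> l \<le> A \<nu> l" if "\<And>\<nu> j l. \<nu> \<in> multiindices \<Longrightarrow> j \<ge> 1 \<Longrightarrow> 1 \<le> l \<Longrightarrow>
      l \<le> mabs \<nu> + 1 \<Longrightarrow> rec_rhs R \<beta> G A \<nu> j l \<le> A (\<lambda>i. \<nu> i + unitvec j i) l"
    by (rule rec_rhs_comparison[where G = G, OF R \<beta> G boundary(2) C_rec(2) that \<nu>])
qed

theorem lemma6p1:
  fixes R :: real and \<beta> :: "nat \<Rightarrow> real" and G :: "nat \<Rightarrow> real"
    and A :: "(nat \<Rightarrow> nat) \<Rightarrow> nat \<Rightarrow> real"
  assumes R: "R > 0"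
    and \<beta>: "\<And>j. j \<ge> 1 \<Longrightarrow> \<beta> j > 0"
    and G: "\<And>n. G n > 0"
    and A_nonneg: "\<And>\<nu> l. \<nu> \<in> multiindices \<Longrightarrow> A \<nu> l \<ge> 0"
    and A0: "\<And>\<nu>. \<nu> \<in> multiindices \<Longrightarrow> A \<nu> 0 = (if \<nu> = (\<lambda>_. 0) then 1 else 0)"
    and Abig: "\<And>\<nu> l. \<nu> \<in> multiindices \<Longrightarrow> l > mabs \<nu> \<Longrightarrow> A \<nu> l = 0"
  shows "((\<forall>\<nu>\<in>multiindices. \<forall>j\<ge>1. \<forall>l. 1 \<le> l \<and> l \<le> mabs \<nu> + 1 \<longrightarrow>
              A (\<lambda>i. \<nu> i + unitvec j i) l = rec_rhs R \<beta> G A \<nu> j l)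
          \<longrightarrow> (\<forall>\<nu>\<in>multiindices. \<nu> \<noteq> (\<lambda>_. 0) \<longrightarrow> (\<forall>l. 1 \<le> l \<and> l \<le> mabs \<nu> \<longrightarrow>
              A \<nu> l = R ^ l * mpow \<beta> \<nu> * BB G (mabs \<nu>) l)))
       \<and> ((\<forall>\<nu>\<in>multiindices. \<forall>j\<ge>1. \<forall>l. 1 \<le> l \<and> l \<le> mabs \<nu> + 1 \<longrightarrow>
              A (\<lambda>i. \<nu> i + unitvec j i) l \<le> rec_rhs R \<beta> G A \<nu> j l)
          \<longrightarrow> (\<forall>\<nu>\<in>multiindices. \<nu> \<noteq> (\<lambda>_. 0) \<longrightarrow> (\<forall>l. 1 \<le> l \<and> l \<le> mabs \<nu> \<longrightarrow>
              A \<nu> l \<le> R ^ l * mpow \<beta> \<nu> * BB G (mabs \<nu>) l)))"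
proof -
  have nonneg: "R \<ge> 0" "\<And>j. j \<ge> 1 \<Longrightarrow> \<beta> j \<ge> 0" "\<And>n. G n \<ge> 0"
    using R \<beta> G by (auto intro: less_imp_le)
  note below = closed_form_comparison(1)[where A = A, OF nonneg A0 Abig]
    and above = closed_form_comparison(2)[where A = A, OF nonneg A0 Abig]
  show ?thesis
  proof (intro conjI impI ballI allI)
    fix \<nu> l
    assume "\<forall>\<nu>\<in>multiindices. \<forall>j\<ge>1. \<forall>l. 1 \<le> l \<and> l \<le> mabs \<nu> + 1 \<longrightarrow>
        A (\<lambda>i. \<nu> i + unitvec j i) l = rec_rhs R \<beta> G A \<nu> j l" and "\<nu> \<in> multiindices"
    then have "A \<nu> l \<le> closed_form R \<beta> G \<nu> l" "closed_form R \<beta> G \<nu> l \<le> A \<nu> l"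
      by (auto intro!: below above)
    moreover assume "1 \<le> l \<and> l \<le> mabs \<nu>"
    ultimately show "A \<nu> l = R ^ l * mpow \<beta> \<nu> * BB G (mabs \<nu>) l"
      using closed_form_eq_BB[of l \<nu>] by simp
  next
    fix \<nu> l
    assume "\<forall>\<nu>\<in>multiindices. \<forall>j\<ge>1. \<forall>l. 1 \<le> l \<and> l \<le> mabs \<nu> + 1 \<longrightarrow>
        A (\<lambda>i. \<nu> i + unitvec j i) l \<le> rec_rhs R \<beta> G A \<nu> j l" and "\<nu> \<in> multiindices"
    then have "A \<nu> l \<le> closed_form R \<beta> G \<nu> l"
      by (auto intro!: below)
    moreover assume "1 \<le> l \<and> l \<le> mabs \<nu>"
    ultimately show "A \<nu> l \<le> R ^ l * mpow \<beta> \<nu> * BB G (mabs \<nu>) l"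
      using closed_form_eq_BB[of l \<nu>] by simp
  qed
qed

end
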